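(* For every integer $n\ge 1$, $$\Phi^{(4)}[aq^n; b; c, c'; x, y] = \Phi^{(4)}[a; b; c, c'; x, y] + \frac{ax(1-b)}{1-c} \sum_{k=1}^n q^{k-1} \Phi^{(4)}[aq^k; bq; cq, c'; x, y] + \frac{ay(1-b)}{1-c'} \sum_{k=1}^n q^{k-1} \Phi^{(4)}[aq^k; bq; c, c'q; xq, y]$$ and $$\Phi^{(4)}[aq^{-n}; b; c, c'; x, y] = \Phi^{(4)}[a; b; c, c'; x, y] - \frac{ax(1-b)}{1-c} \sum_{k=1}^n q^{-k} \Phi^{(4)}[aq^{1-k}; bq; cq, c'; x, y] - \frac{ay(1-b)}{1-c'} \sum_{k=1}^n q^{-k} \Phi^{(4)}[aq^{1-k}; bq; c, c'q; xq, y].$$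
   Context: Let $q$ be a complex number with $0<|q|<1$. For complex $z$ and integer $m\ge 0$, $(z;q)_m=\prod_{j=0}^{m-1}(1-zq^j)$, with $(z;q)_0=1$. The $q$-Appell function $\Phi^{(4)}$ is $$\Phi^{(4)}[a; b; c, c'; x, y] = \sum_{m, n \geq 0} \frac{(a; q)_{m+n} (b; q)_{m+n}}{(q; q)_m (q; q)_n (c; q)_m (c'; q)_n} x^m y^n.$$ Identities are understood as identities of power series in $x,y$ (formal, or convergent for small $|x|,|y|$), with complex parameters chosen so that no denominator occurring vanishes. *)

theory Defs
  imports Complex_Main
begin

definition qpoch :: "complex \<Rightarrow> complex \<Rightarrow> nat \<Rightarrow> complex" where
  "qpoch z q m = (\<Prod>j<m. 1 - z * q ^ j)"

text \<open>A formal power series in two variables x, y is represented by its coefficient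
  function: F i j is the coefficient of x^i y^j.
  Phi4 q a b c c' sx sy is the formal series Phi^(4)[a; b; c, c'; sx*x, sy*y]
  (sx, sy are scalar rescalings of the variables, used for the argument x q).\<close>
definition Phi4 :: "complex \<Rightarrow> complex \<Rightarrow> complex \<Rightarrow> complex \<Rightarrow> complex \<Rightarrow> complex \<Rightarrow> complex
    \<Rightarrow> nat \<Rightarrow> nat \<Rightarrow> complex" where
  "Phi4 q a b c c' sx sy i j =
     qpoch a q (i + j) * qpoch b q (i + j)
       / (qpoch q q i * qpoch q q j * qpoch c q i * qpoch c' q j) * sx ^ i * sy ^ j"

definition xmul :: "(nat \<Rightarrow> nat \<Rightarrow> complex) \<Rightarrow> nat \<Rightarrow> nat \<Rightarrow> complex" where
  "xmul F i j = (if i = 0 then 0 else F (i - 1) j)"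

definition ymul :: "(nat \<Rightarrow> nat \<Rightarrow> complex) \<Rightarrow> nat \<Rightarrow> nat \<Rightarrow> complex" where
  "ymul F i j = (if j = 0 then 0 else F i (j - 1))"

end

theory Submission
  imports Defs
begin

text \<open>Since (aq;q)_N - (a;q)_N = a (1 - q^N) (aq;q)_(N-1) and
  1 - q^(i+j) = (1 - q^i) + q^i (1 - q^j), the coefficientwise difference of the series
  with parameters aq and a splits into an x-shifted and a y-shifted series with parameters
  aq, bq. This one-step contiguous relation telescopes along a, aq, ..., aq^n and along
  a, aq^(-1), ..., aq^(-n).\<close>

lemma qpoch_Suc: "qpoch z q (Suc m) = qpoch z q m * (1 - z * q ^ m)"
  by (simp add: qpoch_def)

lemma qpoch_Suc_shift: "qpoch z q (Suc m) = (1 - z) * qpoch (z * q) q m"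
  unfolding qpoch_def by (subst prod.lessThan_Suc_shift) (simp add: mult.assoc)

lemma qpoch_shift_nonzero: "qpoch z q (Suc m) \<noteq> 0 \<Longrightarrow> qpoch (z * q) q m \<noteq> 0"
  by (simp add: qpoch_Suc_shift)

lemma qpoch_self_nonzero:
  assumes "norm q < 1"
  shows "qpoch q q m \<noteq> 0"
proof -
  have "q ^ Suc j \<noteq> 1" for j
  proof
    assume "q ^ Suc j = 1"
    hence "norm q ^ Suc j = 1" by (metis norm_one norm_power)
    moreover have "norm q ^ Suc j < 1"
      using assms power_Suc_less_one[of "norm q" j] by (cases "q = 0") auto
    ultimately show False by simp
  qed
  thus ?thesis unfolding qpoch_def by (simp add: mult.commute)
qed

lemma qpoch_shift_diff:
  "qpoch (z * q) q (Suc m) - qpoch z q (Suc m) = z * (1 - q ^ Suc m) * qpoch (z * q) q m"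
proof -
  have "qpoch (z * q) q (Suc m) = qpoch (z * q) q m * (1 - z * q ^ Suc m)"
    by (simp add: qpoch_Suc mult.assoc)
  thus ?thesis by (simp add: qpoch_Suc_shift algebra_simps)
qed

lemma Phi4_contiguous_a:
  fixes q A b c c' sx sy :: complex
  assumes q: "norm q < 1"
    and c: "\<And>m. qpoch c q m \<noteq> 0" and c': "\<And>m. qpoch c' q m \<noteq> 0"
  shows "Phi4 q (A * q) b c c' sx sy i j =
           Phi4 q A b c c' sx sy i j
         + A * (1 - b) / (1 - c) * sx * xmul (Phi4 q (A * q) (b * q) (c * q) c' sx sy) i j
         + A * (1 - b) / (1 - c') * sy * ymul (Phi4 q (A * q) (b * q) c (c' * q) (q * sx) sy) i j"
proof (cases "i + j = 0")
  case True
  thus ?thesis by (simp add: Phi4_def qpoch_def xmul_def ymul_def)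
next
  case False
  then obtain M where M: "i + j = Suc M" by (metis not0_implies_Suc)
  have qq: "qpoch q q m \<noteq> 0" for m using qpoch_self_nonzero[OF q] .
  have cq: "qpoch (c * q) q m \<noteq> 0" and cq': "qpoch (c' * q) q m \<noteq> 0" for m
    using c c' qpoch_shift_nonzero by blast+
  define P where "P = qpoch (A * q) q M"
  define B where "B = qpoch b q (i + j)"
  define D where "D = qpoch q q i * qpoch q q j * qpoch c q i * qpoch c' q j"
  define S where "S = sx ^ i * sy ^ j"
  have D: "D \<noteq> 0" using qq c c' by (simp add: D_def)
  have B: "B = (1 - b) * qpoch (b * q) q M" by (simp add: B_def M qpoch_Suc_shift)
  have diff: "Phi4 q (A * q) b c c' sx sy i j - Phi4 q A b c c' sx sy i j
      = A * (1 - q ^ (i + j)) * P * B / D * S"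
  proof -
    have "Phi4 q (A * q) b c c' sx sy i j - Phi4 q A b c c' sx sy i j
        = (qpoch (A * q) q (i + j) - qpoch A q (i + j)) * B / D * S"
      by (simp add: Phi4_def B_def D_def S_def algebra_simps diff_divide_distrib)
    thus ?thesis by (simp only: M qpoch_shift_diff) (simp add: P_def)
  qed
  have x_term: "A * (1 - b) / (1 - c) * sx * xmul (Phi4 q (A * q) (b * q) (c * q) c' sx sy) i j
      = A * (1 - q ^ i) * P * B / D * S"
  proof (cases i)
    case 0 thus ?thesis by (simp add: xmul_def)
  next
    case (Suc m)
    have "m + j = M" using M Suc by simp
    hence xm: "xmul (Phi4 q (A * q) (b * q) (c * q) c' sx sy) i j
        = P * qpoch (b * q) q M / (qpoch q q m * qpoch q q j * qpoch (c * q) q m * qpoch c' q j)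
          * sx ^ m * sy ^ j"
      by (simp add: xmul_def Suc Phi4_def P_def)
    have Dm: "D = qpoch q q m * (1 - q ^ i) * qpoch q q j * ((1 - c) * qpoch (c * q) q m) * qpoch c' q j"
      unfolding D_def Suc qpoch_Suc_shift[of c] by (simp add: qpoch_Suc)
    \<comment> \<open>opaque names for the two cancelling factors keep \<open>field_simps\<close> from multiplying them out\<close>
    define u v where "u = 1 - q ^ i" and "v = 1 - c"
    have "u \<noteq> 0" "v \<noteq> 0" using D Dm by (auto simp: u_def v_def)
    moreover have "sx ^ i = sx * sx ^ m" by (simp add: Suc)
    ultimately show ?thesis using qq cq c'
      unfolding xm Dm B S_def u_def [symmetric] v_def [symmetric] by (simp add: field_simps)
  qed
  have y_term: "A * (1 - b) / (1 - c') * sy * ymul (Phi4 q (A * q) (b * q) c (c' * q) (q * sx) sy) i j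
      = A * q ^ i * (1 - q ^ j) * P * B / D * S"
  proof (cases j)
    case 0 thus ?thesis by (simp add: ymul_def)
  next
    case (Suc m)
    have "i + m = M" using M Suc by simp
    hence ym: "ymul (Phi4 q (A * q) (b * q) c (c' * q) (q * sx) sy) i j
        = P * qpoch (b * q) q M / (qpoch q q i * qpoch q q m * qpoch c q i * qpoch (c' * q) q m)
          * (q * sx) ^ i * sy ^ m"
      by (simp add: ymul_def Suc Phi4_def P_def)
    have Dm: "D = qpoch q q i * (qpoch q q m * (1 - q ^ j)) * qpoch c q i * ((1 - c') * qpoch (c' * q) q m)"
      unfolding D_def Suc qpoch_Suc_shift[of c'] by (simp add: qpoch_Suc)
    define u v where "u = 1 - q ^ j" and "v = 1 - c'"
    have "u \<noteq> 0" "v \<noteq> 0" using D Dm by (auto simp: u_def v_def)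
    moreover have "sy ^ j = sy * sy ^ m" by (simp add: Suc)
    ultimately show ?thesis using qq cq' c
      unfolding ym Dm B S_def u_def [symmetric] v_def [symmetric]
      by (simp add: field_simps power_mult_distrib)
  qed
  have "A * (1 - q ^ (i + j)) * P * B / D * S
      = A * (1 - q ^ i) * P * B / D * S + A * q ^ i * (1 - q ^ j) * P * B / D * S"
    by (simp add: power_add algebra_simps add_divide_distrib [symmetric])
  thus ?thesis using diff x_term y_term by (simp add: algebra_simps)
qed

lemma telescope_geometric:
  fixes f g :: "'a::field \<Rightarrow> 'a" and q a :: 'a
  assumes step: "\<And>A. f (A * q) = f A + A * g (A * q)"
  shows "f (a * q ^ n) = f a + a * (\<Sum>k=1..n. q ^ (k - 1) * g (a * q ^ k))"
proof (induction n)
  case (Suc n)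
  have "f (a * q ^ Suc n) = f (a * q ^ n) + a * q ^ n * g (a * q ^ Suc n)"
    using step[of "a * q ^ n"] by (simp only: power_Suc2 mult.assoc)
  thus ?case using Suc.IH by (simp add: algebra_simps)
qed simp

lemma telescope_geometric_inverse:
  fixes f g :: "'a::field \<Rightarrow> 'a" and q a :: 'a
  assumes step: "\<And>A. f (A * q) = f A + A * g (A * q)" and "q \<noteq> 0"
  shows "f (a * q powi (- int n)) = f a - a * (\<Sum>k=1..n. q powi (- int k) * g (a * q powi (1 - int k)))"
proof (induction n)
  case (Suc n)
  define A where "A = a * q powi (- int (Suc n))"
  have "A * q = a * q powi (- int n)"
    using \<open>q \<noteq> 0\<close> unfolding A_def
    by (simp only: power_int_minus power_int_of_nat mult.assoc) (simp add: field_simps)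
  hence "f (a * q powi (- int n)) = f A + A * g (a * q powi (1 - int (Suc n)))"
    using step[of A] by simp
  thus ?case using Suc.IH by (simp add: A_def algebra_simps)
qed simp

theorem theorem14:
  fixes q a b c c' :: complex and n :: nat
  assumes "0 < norm q" and "norm q < 1"
    and "\<And>m. qpoch c q m \<noteq> 0" and "\<And>m. qpoch c' q m \<noteq> 0"
    and "n \<ge> 1"
  shows "(\<forall>i j. Phi4 q (a * q ^ n) b c c' 1 1 i j =
             Phi4 q a b c c' 1 1 i j
           + a * (1 - b) / (1 - c) *
               (\<Sum>k=1..n. q ^ (k - 1) * xmul (Phi4 q (a * q ^ k) (b * q) (c * q) c' 1 1) i j)
           + a * (1 - b) / (1 - c') *
               (\<Sum>k=1..n. q ^ (k - 1) * ymul (Phi4 q (a * q ^ k) (b * q) c (c' * q) q 1) i j))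
       \<and> (\<forall>i j. Phi4 q (a * q powi (- int n)) b c c' 1 1 i j =
             Phi4 q a b c c' 1 1 i j
           - a * (1 - b) / (1 - c) *
               (\<Sum>k=1..n. q powi (- int k) *
                  xmul (Phi4 q (a * q powi (1 - int k)) (b * q) (c * q) c' 1 1) i j)
           - a * (1 - b) / (1 - c') *
               (\<Sum>k=1..n. q powi (- int k) *
                  ymul (Phi4 q (a * q powi (1 - int k)) (b * q) c (c' * q) q 1) i j))"
proof (intro conjI allI)
  fix i j
  define f where "f A = Phi4 q A b c c' 1 1 i j" for A
  define gx where "gx A = xmul (Phi4 q A (b * q) (c * q) c' 1 1) i j" for A
  define gy where "gy A = ymul (Phi4 q A (b * q) c (c' * q) q 1) i j" for A
  have step: "f (A * q) = f A + A * ((1 - b) / (1 - c) * gx (A * q) + (1 - b) / (1 - c') * gy (A * q))"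
    for A
    using Phi4_contiguous_a[OF assms(2-4), of A b 1 1 i j]
    by (simp add: f_def gx_def gy_def algebra_simps)
  show "f (a * q ^ n) = f a + a * (1 - b) / (1 - c) * (\<Sum>k=1..n. q ^ (k - 1) * gx (a * q ^ k))
      + a * (1 - b) / (1 - c') * (\<Sum>k=1..n. q ^ (k - 1) * gy (a * q ^ k))"
    by (simp add: telescope_geometric[OF step] sum_distrib_left sum.distrib algebra_simps)
  have "q \<noteq> 0" using assms(1) by auto
  show "f (a * q powi (- int n)) = f a
      - a * (1 - b) / (1 - c) * (\<Sum>k=1..n. q powi (- int k) * gx (a * q powi (1 - int k)))
      - a * (1 - b) / (1 - c') * (\<Sum>k=1..n. q powi (- int k) * gy (a * q powi (1 - int k)))"
    by (simp add: telescope_geometric_inverse[OF step \<open>q \<noteq> 0\<close>]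
        sum_distrib_left sum.distrib algebra_simps)
qed

end
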